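(* In the setting of problem (CP1) and the prox-ADC method described in the context, suppose Assumptions 1–4 hold. Then (a) the subproblem defining $x^{k,i+1}$ is feasible for all $k,i\in\mathbb{N}$; (b) for every $k\in\mathbb{N}$ the smallest index $i$ for which the inner stopping conditions hold, denoted $i_k$, is finite.
   Context: Problem (CP1): integers $0\le m_1\le m$; $f_p:\mathbb{R}^n\to\mathbb{R}$; $\varphi_p:\mathbb{R}\to\mathbb{R}$ convex for $p\le m_1$; $\varphi_p=\delta_{(-\infty,0]}$ for $p>m_1$; minimize $\sum_{p\le m_1}\varphi_p(f_p(x))$ s.t. $f_p(x)\le0$, $p>m_1$. $I_1=\{p:\varphi_p$ nondecreasing$\}$, $I_2=\{1,\dots,m\}\setminus I_1$. Monotonic decomposition $\varphi_p=\varphi_p^\uparrow+\varphi_p^\downarrow$: if $\varphi_p$ nondecreasing, $\varphi_p^\uparrow=\varphi_p,\varphi_p^\downarrow=0$; if nonincreasing, $\varphi_p^\uparrow=0,\varphi_p^\downarrow=\varphi_p$; otherwise with a minimizer $z^*$, $\varphi^\uparrow_p=\varphi_p(z^* )$ for $z\le z^*$, $\varphi_p(z)$ for $z>z^*$; $\varphi_p^\downarrow=\varphi_p(z)-\varphi_p(z^* )$ for $z\le z^*$, $0$ for $z>z^*$. Assumption 1: for each $p$, $f_p^k=g_p^k-h_p^k$ with $g_p^k,h_p^k:\mathbb{R}^n\to\mathbb{R}$ convex, $f_p^k$ epi-converges to $f_p$; $-\infty<\liminf_{x'\to x,k\to\infty}f_p^k(x')\le\limsup_{x'\to x,k\to\infty}f_p^k(x')<\infty$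 for all $x$; $\varphi_p\circ f_p^k$ epi-converges to $\varphi_p\circ f_p$. Assumption 2: with $X^k=\{x:f_p^k(x)\le0,\ p=m_1+1..m\}$ and $\alpha_p^k=\sup_{x\in X^k}[f_p^{k+1}(x)-f_p^k(x)]_+$, there exist $x^0$ and nonnegative $\{\widehat\alpha_p^k\}_k$ ($p>m_1$) with $\alpha_p^k\le\widehat\alpha_p^k$, $\sum_{k'}\widehat\alpha_p^{k'}<\infty$ and $f_p^0(x^0)\le-\sum_{k'=0}^\infty\widehat\alpha_p^{k'}$; set $\widehat\alpha_p^k=0$ for $p\le m_1$. Assumption 3: for each $k$ there is $\ell_k>0$ with $\min\{\mathbb H(\partial g_p^k(x),\partial g_p^k(x')),\mathbb H(\partial h_p^k(x),\partial h_p^k(x'))\}\le\ell_k\|x-x'\|$ for all $x,x'$ and all $p$ ($\mathbb H$ = Hausdorff distance). Assumption 4: for each $k$, $\sum_{p\le m_1}\varphi_p(f^k_p(x))+\sum_{p>m_1}\delta_{(-\infty,0]}(f_p^k(x))$ is level-bounded. Method: choose $\lambda>0$ and positive $\epsilon_k\downarrow0$, $\delta_k\downarrow0$ with $\delta_k/(\lambda+\ell_k)\downarrow0$; $\sigma_p^k=\sum_{k'\ge k}\widehat\alpha_p^{k'}$. For a point $y$ pick $a_p\in\partial h_p^k(y)$, $b_p\in\partial g_p^k(y)$ and set $f_p^{k,\mathrm{up}}(x;y)=g_p^k(x)-h_p^k(y)-a_p^\top(x-y)+\sigma_p^k$, $f_p^{k,\mathrm{lo}}(x;y)=g_p^k(y)+b_p^\top(x-y)-h_p^k(x)$,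 and for $p\le m_1$, $\widehat F_p^k(x;y)=\varphi_p^\uparrow(f_p^{k,\mathrm{up}}(x;y))+\varphi_p^\downarrow(f_p^{k,\mathrm{lo}}(x;y))$. For $k=0,1,\dots$: $x^{k,0}=x^k$; for $i=0,1,\dots$: $x^{k,i+1}=\operatorname{argmin}_x\{\sum_{p\le m_1}\widehat F_p^k(x;x^{k,i})+\tfrac\lambda2\|x-x^{k,i}\|^2:\ f_p^{k,\mathrm{up}}(x;x^{k,i})\le0,\ p>m_1\}$; stop the inner loop (with $i_k=i$) when $f_p^{k,\mathrm{up}}(x^{k,i+1};x^{k,i})\le f_p^k(x^{k,i+1})+\sigma_p^k+\epsilon_k$ for all $p$, $f_p^{k,\mathrm{lo}}(x^{k,i+1};x^{k,i})\ge f_p^k(x^{k,i+1})-\epsilon_k$ for $p\in I_2$, and $\|x^{k,i+1}-x^{k,i}\|\le\delta_k/(\lambda+\ell_k)$; then set $x^{k+1}=x^{k,i_k}$. *)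

theory Defs
  imports "HOL-Analysis.Analysis" "HOL-Library.Liminf_Limsup"
begin

definition subdiff :: "('a::real_inner \<Rightarrow> real) \<Rightarrow> 'a \<Rightarrow> 'a set" where
  "subdiff f x = {v. \<forall>y. f x + v \<bullet> (y - x) \<le> f y}"

definition hausdorff_dist :: "'a::metric_space set \<Rightarrow> 'a set \<Rightarrow> ereal" where
  "hausdorff_dist A B =
     max (SUP a\<in>A. ereal (infdist a B)) (SUP b\<in>B. ereal (infdist b A))"

text \<open>Epi-convergence of a sequence of extended-real-valued functions
  (sequential characterisation, Rockafellar--Wets Prop. 7.2).\<close>
definition epi_converges :: "(nat \<Rightarrow> 'a::metric_space \<Rightarrow> ereal) \<Rightarrow> ('a \<Rightarrow> ereal) \<Rightarrow> bool" where
  "epi_converges F G \<longleftrightarrow>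
     (\<forall>x. (\<forall>xs. xs \<longlonglongrightarrow> x \<longrightarrow> G x \<le> liminf (\<lambda>k. F k (xs k)))
        \<and> (\<exists>xs. xs \<longlonglongrightarrow> x \<and> limsup (\<lambda>k. F k (xs k)) \<le> G x))"

definition ind_nonpos :: "real \<Rightarrow> ereal" where
  "ind_nonpos t = (if t \<le> 0 then 0 else \<infinity>)"

definition level_bounded :: "('a::metric_space \<Rightarrow> ereal) \<Rightarrow> bool" where
  "level_bounded F \<longleftrightarrow> (\<forall>c::real. bounded {x. F x \<le> ereal c})"

definition phi_up :: "(real \<Rightarrow> real) \<Rightarrow> real \<Rightarrow> real \<Rightarrow> real" where
  "phi_up \<phi> z t =
     (if mono \<phi> then \<phi> t else if antimono \<phi> then 0
      else if t \<le> z then \<phi> z else \<phi> t)"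

definition phi_down :: "(real \<Rightarrow> real) \<Rightarrow> real \<Rightarrow> real \<Rightarrow> real" where
  "phi_down \<phi> z t =
     (if mono \<phi> then 0 else if antimono \<phi> then \<phi> t
      else if t \<le> z then \<phi> t - \<phi> z else 0)"

end

(*
  (a) The invariant is f_p^k(x^{k,i}) + sigma_p^k <= 0 for every constraint p > m1.  The
  majorant f_p^{k,up}( . ; x^{k,i}) touches f_p^k + sigma_p^k at x^{k,i}, so x^{k,i} is feasible
  for its own subproblem, and the next iterate, being feasible for the majorised constraints,
  again satisfies the invariant.  Passing from k to k+1 the constraint functions grow by at
  most alpha_p^k <= ahat_p^k = sigma_p^k - sigma_p^{k+1}, so the warm start keeps it.

  (b) The subproblem objective majorises F_k + lam/2 |. - x^{k,i}|^2 (monotone decomposition of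
  phi_p) and equals F_k at x^{k,i}; hence F_k decreases by lam/2 |x^{k,i+1} - x^{k,i}|^2 per step.
  Level-boundedness confines the iterates to a compact set on which F_k is bounded below, so
  the steps tend to 0, and by uniform continuity so do the linearisation errors of g and h,
  which are exactly the gaps in the stopping test.
*)
theory Submission
  imports Defs
begin

lemma phi_up_plus_phi_down: "phi_up \<phi> z t + phi_down \<phi> z t = \<phi> t"
  by (simp add: phi_up_def phi_down_def)

lemma convex_on_le_beyond_minimiser:
  fixes \<phi> :: "real \<Rightarrow> real"
  assumes "convex_on UNIV \<phi>" and "\<forall>t. \<phi> z \<le> \<phi> t" and "s \<in> {z..t} \<union> {t..z}"
  shows "\<phi> s \<le> \<phi> t"
proof -
  have "\<phi> s \<le> max (\<phi> z) (\<phi> t)"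
    using assms(3) convex_on_le_max[OF convex_on_subset[OF assms(1)]] by (fastforce simp: max.commute)
  then show ?thesis
    using assms(2) by simp
qed

lemma mono_phi_up:
  assumes "convex_on UNIV \<phi>" and "\<not> mono \<phi> \<Longrightarrow> \<not> antimono \<phi> \<Longrightarrow> \<forall>t. \<phi> z \<le> \<phi> t"
  shows "mono (phi_up \<phi> z)"
proof (cases "mono \<phi> \<or> antimono \<phi>")
  case False
  then show ?thesis
    using assms convex_on_le_beyond_minimiser[OF assms(1)] by (auto simp: mono_def phi_up_def)
qed (auto simp: mono_def phi_up_def)

lemma antimono_phi_down:
  assumes "convex_on UNIV \<phi>" and "\<not> mono \<phi> \<Longrightarrow> \<not> antimono \<phi> \<Longrightarrow> \<forall>t. \<phi> z \<le> \<phi> t"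
  shows "antimono (phi_down \<phi> z)"
proof (cases "mono \<phi> \<or> antimono \<phi>")
  case False
  then show ?thesis
    using assms convex_on_le_beyond_minimiser[OF assms(1)] by (auto simp: antimono_def phi_down_def)
qed (auto simp: antimono_def phi_down_def)

lemma le_phi_up_plus_phi_down:
  assumes "convex_on UNIV \<phi>" and "\<not> mono \<phi> \<Longrightarrow> \<not> antimono \<phi> \<Longrightarrow> \<forall>t. \<phi> z \<le> \<phi> t"
    and "lo \<le> t" and "t \<le> up"
  shows "\<phi> t \<le> phi_up \<phi> z up + phi_down \<phi> z lo"
proof -
  have "\<phi> t = phi_up \<phi> z t + phi_down \<phi> z t"
    by (simp add: phi_up_plus_phi_down)
  also have "\<dots> \<le> phi_up \<phi> z up + phi_down \<phi> z lo"
    using monoD[OF mono_phi_up[OF assms(1,2)] assms(4)] antimonoD[OF antimono_phi_down[OF assms(1,2)] assms(3)]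
    by (rule add_mono)
  finally show ?thesis .
qed

lemma subdiffD: "v \<in> subdiff f x \<Longrightarrow> f x + v \<bullet> (y - x) \<le> f y"
  by (simp add: subdiff_def)

text \<open>The subgradient inequality at the reflected point \<open>2x - y\<close> bounds the linearisation
  error by differences of function values; this is what makes Assumption 3 dispensable.\<close>

lemma subdiff_linearisation_error_le:
  assumes "v \<in> subdiff f x"
  shows "f y - f x - v \<bullet> (y - x) \<le> (f y - f x) + (f (2 *\<^sub>R x - y) - f x)"
proof -
  have "f x + v \<bullet> (x - y) \<le> f (2 *\<^sub>R x - y)"
    using subdiffD[OF assms, of "2 *\<^sub>R x - y"] by (simp add: scaleR_2 algebra_simps)
  then show ?thesis
    by (simp add: inner_diff_right)
qed

lemma descent_steps_tendsto_zero:
  fixes x :: "nat \<Rightarrow> 'a::real_normed_vector"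
  assumes descent: "\<And>i. F (x (Suc i)) + c * (norm (x (Suc i) - x i))\<^sup>2 \<le> F (x i)"
    and "0 < c" and lower: "\<And>i. L \<le> F (x i)"
  shows "(\<lambda>i. x (Suc i) - x i) \<longlonglongrightarrow> 0"
proof -
  have partial: "c * (\<Sum>i<n. (norm (x (Suc i) - x i))\<^sup>2) \<le> F (x 0) - F (x n)" for n
  proof (induction n)
    case (Suc n)
    then show ?case
      using descent[of n] by (simp add: algebra_simps)
  qed simp
  have "summable (\<lambda>i. (norm (x (Suc i) - x i))\<^sup>2)"
  proof (rule bounded_imp_summable)
    show "(\<Sum>i\<le>n. (norm (x (Suc i) - x i))\<^sup>2) \<le> (F (x 0) - L) / c" for n
      using partial[of "Suc n"] lower[of "Suc n"] \<open>0 < c\<close>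
      by (simp add: lessThan_Suc_atMost pos_le_divide_eq mult.commute)
  qed simp
  then have "(\<lambda>i. sqrt ((norm (x (Suc i) - x i))\<^sup>2)) \<longlonglongrightarrow> 0"
    using tendsto_real_sqrt[OF summable_LIMSEQ_zero] by fastforce
  then show ?thesis
    by (simp add: tendsto_norm_zero_iff)
qed

lemma linearisation_error_tendsto_zero:
  fixes f :: "'a::euclidean_space \<Rightarrow> real"
  assumes f: "convex_on UNIV f" and bdd: "bounded (range x)"
    and steps: "(\<lambda>i. x (Suc i) - x i) \<longlonglongrightarrow> 0" and sub: "\<And>i. v i \<in> subdiff f (x i)"
  shows "(\<lambda>i. f (x (Suc i)) - f (x i) - v i \<bullet> (x (Suc i) - x i)) \<longlonglongrightarrow> 0"
proof -
  obtain R where R: "\<And>i. norm (x i) \<le> R"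
    using bdd by (auto simp: bounded_iff)
  then have "0 \<le> R"
    by (meson norm_ge_zero order_trans)
  define K where "K = cball (0::'a) (3 * R)"
  have x_in_K: "x i \<in> K" for i
    using R[of i] \<open>0 \<le> R\<close> by (simp add: K_def)
  have uc: "uniformly_continuous_on K f"
    unfolding K_def
    by (intro compact_uniformly_continuous continuous_on_subset[OF convex_on_continuous[OF open_UNIV f]])
      auto
  have close: "(\<lambda>i. f (y i) - f (x i)) \<longlonglongrightarrow> 0"
    if "\<And>i. y i \<in> K" and "(\<lambda>i. y i - x i) \<longlonglongrightarrow> 0" for y
  proof -
    have "(\<lambda>i. dist (y i) (x i)) \<longlonglongrightarrow> 0"
      using that(2) by (simp add: dist_norm tendsto_norm_zero_iff)
    then have "(\<lambda>i. dist (f (y i)) (f (x i))) \<longlonglongrightarrow> 0"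
      using uc that(1) x_in_K by (simp add: uniformly_continuous_on_sequentially)
    then show ?thesis
      by (simp add: dist_real_def tendsto_rabs_zero_iff)
  qed
  have "(\<lambda>i. f (x (Suc i)) - f (x i)) \<longlonglongrightarrow> 0"
    using x_in_K steps by (intro close)
  moreover have "(\<lambda>i. f (2 *\<^sub>R x i - x (Suc i)) - f (x i)) \<longlonglongrightarrow> 0"
  proof (rule close)
    show "2 *\<^sub>R x i - x (Suc i) \<in> K" for i
    proof -
      have "norm (2 *\<^sub>R x i - x (Suc i)) \<le> 2 * norm (x i) + norm (x (Suc i))"
        using norm_triangle_ineq4[of "2 *\<^sub>R x i" "x (Suc i)"] by simp
      then show ?thesis
        using R[of i] R[of "Suc i"] by (simp add: K_def)
    qed
    show "(\<lambda>i. 2 *\<^sub>R x i - x (Suc i) - x i) \<longlonglongrightarrow> 0"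
      using tendsto_minus[OF steps] by (simp add: scaleR_2 algebra_simps)
  qed
  ultimately have bound: "(\<lambda>i. (f (x (Suc i)) - f (x i)) + (f (2 *\<^sub>R x i - x (Suc i)) - f (x i)))
      \<longlonglongrightarrow> 0"
    using tendsto_add by fastforce
  show ?thesis
  proof (rule real_tendsto_sandwich[OF _ _ tendsto_const bound])
    show "\<forall>\<^sub>F i in sequentially. 0 \<le> f (x (Suc i)) - f (x i) - v i \<bullet> (x (Suc i) - x i)"
      using subdiffD[OF sub] by (simp add: algebra_simps)
    show "\<forall>\<^sub>F i in sequentially. f (x (Suc i)) - f (x i) - v i \<bullet> (x (Suc i) - x i)
        \<le> (f (x (Suc i)) - f (x i)) + (f (2 *\<^sub>R x i - x (Suc i)) - f (x i))"
      using subdiff_linearisation_error_le[OF sub] by simp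
  qed
qed

locale prox_adc_data =
  fixes m1 m :: nat
    and phi :: "nat \<Rightarrow> real \<Rightarrow> real" and zs :: "nat \<Rightarrow> real"
    and g h :: "nat \<Rightarrow> nat \<Rightarrow> 'a::euclidean_space \<Rightarrow> real"
    and ahat :: "nat \<Rightarrow> nat \<Rightarrow> real"
    and lam :: real
    and a b :: "nat \<Rightarrow> nat \<Rightarrow> nat \<Rightarrow> 'a"
    and xx :: "nat \<Rightarrow> nat \<Rightarrow> 'a"
begin

definition fk :: "nat \<Rightarrow> nat \<Rightarrow> 'a \<Rightarrow> real"
  where "fk k p x = g k p x - h k p x"

definition sig :: "nat \<Rightarrow> nat \<Rightarrow> real"
  where "sig p k = (\<Sum>j. ahat p (k + j))"

definition fup :: "nat \<Rightarrow> nat \<Rightarrow> nat \<Rightarrow> 'a \<Rightarrow> real"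
  where "fup k i p x = g k p x - h k p (xx k i) - a k i p \<bullet> (x - xx k i) + sig p k"

definition flo :: "nat \<Rightarrow> nat \<Rightarrow> nat \<Rightarrow> 'a \<Rightarrow> real"
  where "flo k i p x = g k p (xx k i) + b k i p \<bullet> (x - xx k i) - h k p x"

definition obj :: "nat \<Rightarrow> nat \<Rightarrow> 'a \<Rightarrow> real"
  where "obj k i x = (\<Sum>p\<in>{1..m1}. phi_up (phi p) (zs p) (fup k i p x)
                                   + phi_down (phi p) (zs p) (flo k i p x))
                     + lam / 2 * (norm (x - xx k i))\<^sup>2"

definition feas :: "nat \<Rightarrow> nat \<Rightarrow> 'a set"
  where "feas k i = {x. \<forall>p\<in>{m1<..m}. fup k i p x \<le> 0}"

definition Fk :: "nat \<Rightarrow> 'a \<Rightarrow> real"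
  where "Fk k x = (\<Sum>p\<in>{1..m1}. phi p (fk k p x))"

definition margin_feasible :: "nat \<Rightarrow> 'a \<Rightarrow> bool"
  where "margin_feasible k x \<longleftrightarrow> (\<forall>p\<in>{m1<..m}. fk k p x + sig p k \<le> 0)"

end

text \<open>\<open>constraint_drift\<close> is the pointwise content of \<open>alph p k \<le> ahat p k\<close>; \<open>warm_start\<close> only
  asks that the next outer iterate be some inner iterate, whichever the stopping rule selects.\<close>

locale prox_adc = prox_adc_data +
  assumes m1_le: "m1 \<le> m"
    and phi_convex: "p \<in> {1..m1} \<Longrightarrow> convex_on UNIV (phi p)"
    and zs_min: "p \<in> {1..m1} \<Longrightarrow> \<not> mono (phi p) \<Longrightarrow> \<not> antimono (phi p) \<Longrightarrow> \<forall>t. phi p (zs p) \<le> phi p t"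
    and g_convex: "p \<in> {1..m} \<Longrightarrow> convex_on UNIV (g k p)"
    and h_convex: "p \<in> {1..m} \<Longrightarrow> convex_on UNIV (h k p)"
    and ahat_zero: "p \<le> m1 \<Longrightarrow> ahat p k = 0"
    and ahat_nonneg: "p \<in> {m1<..m} \<Longrightarrow> 0 \<le> ahat p k"
    and ahat_summable: "p \<in> {m1<..m} \<Longrightarrow> summable (ahat p)"
    and constraint_drift: "p \<in> {m1<..m} \<Longrightarrow> \<forall>q\<in>{m1<..m}. fk k q x \<le> 0 \<Longrightarrow>
                             fk (Suc k) p x - fk k p x \<le> ahat p k"
    and initial_feasible: "p \<in> {m1<..m} \<Longrightarrow> fk 0 p (xx 0 0) \<le> - (\<Sum>k. ahat p k)"
    and objective_level_bounded: "level_bounded (\<lambda>x. \<Sum>p\<in>{1..m}.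
          if p \<le> m1 then ereal (phi p (fk k p x)) else ind_nonpos (fk k p x))"
    and lam_pos: "0 < lam"
    and subgrad_h: "p \<in> {1..m} \<Longrightarrow> a k i p \<in> subdiff (h k p) (xx k i)"
    and subgrad_g: "p \<in> {1..m} \<Longrightarrow> b k i p \<in> subdiff (g k p) (xx k i)"
    and warm_start: "\<exists>j. xx (Suc k) 0 = xx k j"
    and inner_step: "feas k i \<noteq> {} \<Longrightarrow>
          xx k (Suc i) \<in> feas k i \<and> (\<forall>x\<in>feas k i. obj k i (xx k (Suc i)) \<le> obj k i x)"
begin

lemma sig_zero: "p \<le> m1 \<Longrightarrow> sig p k = 0"
  by (simp add: sig_def ahat_zero)

lemma summable_ahat_shift: "p \<in> {m1<..m} \<Longrightarrow> summable (\<lambda>j. ahat p (k + j))"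
  using summable_ignore_initial_segment[OF ahat_summable, of p k] by (simp add: add.commute)

lemma sig_nonneg: "p \<in> {m1<..m} \<Longrightarrow> 0 \<le> sig p k"
  unfolding sig_def by (intro suminf_nonneg summable_ahat_shift ahat_nonneg)

lemma sig_Suc: "p \<in> {m1<..m} \<Longrightarrow> sig p k = ahat p k + sig p (Suc k)"
  using suminf_split_head[OF summable_ahat_shift, of p k] by (simp add: sig_def)

lemma fup_ge: "p \<in> {1..m} \<Longrightarrow> fk k p x + sig p k \<le> fup k i p x"
  using subdiffD[OF subgrad_h, of p k i x] by (simp add: fup_def fk_def)

lemma fup_at: "fup k i p (xx k i) = fk k p (xx k i) + sig p k"
  by (simp add: fup_def fk_def)

lemma flo_le: "p \<in> {1..m} \<Longrightarrow> flo k i p x \<le> fk k p x"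
  using subdiffD[OF subgrad_g, of p k i x] by (simp add: flo_def fk_def)

lemma flo_at: "flo k i p (xx k i) = fk k p (xx k i)"
  by (simp add: flo_def fk_def)

lemma margin_feasible_imp_constraints:
  "margin_feasible k x \<Longrightarrow> p \<in> {m1<..m} \<Longrightarrow> fk k p x \<le> 0"
  using sig_nonneg[of p k] by (force simp: margin_feasible_def)

lemma margin_feasible_Suc:
  assumes "margin_feasible k x"
  shows "margin_feasible (Suc k) x"
  unfolding margin_feasible_def
proof
  fix p assume p: "p \<in> {m1<..m}"
  have "fk (Suc k) p x - fk k p x \<le> ahat p k"
    using constraint_drift[OF p] margin_feasible_imp_constraints[OF assms] by blast
  then show "fk (Suc k) p x + sig p (Suc k) \<le> 0"
    using assms p sig_Suc[OF p, of k] unfolding margin_feasible_def by force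
qed

lemma margin_feasible_in_feas: "margin_feasible k (xx k i) \<Longrightarrow> xx k i \<in> feas k i"
  by (simp add: margin_feasible_def feas_def fup_at)

lemma margin_feasible_inner_step:
  assumes "margin_feasible k (xx k i)"
  shows "margin_feasible k (xx k (Suc i))"
proof -
  have "xx k (Suc i) \<in> feas k i"
    using inner_step margin_feasible_in_feas[OF assms] by blast
  then show ?thesis
    unfolding margin_feasible_def
  proof (intro ballI)
    fix p assume p: "p \<in> {m1<..m}"
    have "fup k i p (xx k (Suc i)) \<le> 0"
      using \<open>xx k (Suc i) \<in> feas k i\<close> p unfolding feas_def by blast
    then show "fk k p (xx k (Suc i)) + sig p k \<le> 0"
      using fup_ge[of p k "xx k (Suc i)" i] p m1_le by simp
  qed
qed

lemma margin_feasible_iterates: "margin_feasible k (xx k i)"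
proof (induction k arbitrary: i)
  case 0
  have "margin_feasible 0 (xx 0 0)"
    unfolding margin_feasible_def
  proof
    fix p assume "p \<in> {m1<..m}"
    then show "fk 0 p (xx 0 0) + sig p 0 \<le> 0"
      using initial_feasible[of p] by (simp add: sig_def)
  qed
  then show ?case
    by (induction i) (simp_all add: margin_feasible_inner_step)
next
  case (Suc k)
  obtain j where "xx (Suc k) 0 = xx k j"
    using warm_start by blast
  then have "margin_feasible (Suc k) (xx (Suc k) 0)"
    using Suc.IH margin_feasible_Suc by simp
  then show ?case
    by (induction i) (simp_all add: margin_feasible_inner_step)
qed

theorem feas_nonempty: "feas k i \<noteq> {}"
  using margin_feasible_in_feas[OF margin_feasible_iterates] by blast

lemma obj_at: "obj k i (xx k i) = Fk k (xx k i)"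
  by (simp add: obj_def Fk_def fup_at flo_at sig_zero phi_up_plus_phi_down)

lemma obj_ge: "Fk k x + lam / 2 * (norm (x - xx k i))\<^sup>2 \<le> obj k i x"
proof -
  have "phi p (fk k p x) \<le> phi_up (phi p) (zs p) (fup k i p x) + phi_down (phi p) (zs p) (flo k i p x)"
    if p: "p \<in> {1..m1}" for p
  proof (rule le_phi_up_plus_phi_down)
    show "convex_on UNIV (phi p)"
      using phi_convex[OF p] .
    show "\<not> mono (phi p) \<Longrightarrow> \<not> antimono (phi p) \<Longrightarrow> \<forall>t. phi p (zs p) \<le> phi p t"
      using zs_min[OF p] .
    show "flo k i p x \<le> fk k p x" "fk k p x \<le> fup k i p x"
      using p m1_le flo_le fup_ge[of p k x i] sig_zero[of p k] by auto
  qed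
  then show ?thesis
    unfolding obj_def Fk_def by (intro add_right_mono sum_mono) auto
qed

lemma Fk_descent: "Fk k (xx k (Suc i)) + lam / 2 * (norm (xx k (Suc i) - xx k i))\<^sup>2 \<le> Fk k (xx k i)"
proof -
  have "xx k i \<in> feas k i"
    using margin_feasible_in_feas[OF margin_feasible_iterates] .
  then have "obj k i (xx k (Suc i)) \<le> obj k i (xx k i)"
    using inner_step by blast
  then show ?thesis
    using obj_ge[of k "xx k (Suc i)" i] by (simp add: obj_at)
qed

lemma Fk_iterates_le_start: "Fk k (xx k i) \<le> Fk k (xx k 0)"
proof (induction i)
  case (Suc i)
  have "0 \<le> lam / 2 * (norm (xx k (Suc i) - xx k i))\<^sup>2"
    using lam_pos by simp
  then show ?case
    using Suc Fk_descent[of k i] by linarith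
qed simp

lemma objective_at_iterates: "(\<Sum>p\<in>{1..m}.
    if p \<le> m1 then ereal (phi p (fk k p (xx k i))) else ind_nonpos (fk k p (xx k i))) = ereal (Fk k (xx k i))"
proof -
  have "(\<Sum>p\<in>{1..m}. if p \<le> m1 then ereal (phi p (fk k p (xx k i))) else ind_nonpos (fk k p (xx k i)))
      = (\<Sum>p\<in>{1..m}. ereal (if p \<le> m1 then phi p (fk k p (xx k i)) else 0))"
    using margin_feasible_imp_constraints[OF margin_feasible_iterates]
    by (intro sum.cong) (auto simp: ind_nonpos_def)
  also have "\<dots> = ereal (\<Sum>p\<in>{p\<in>{1..m}. p \<le> m1}. phi p (fk k p (xx k i)))"
    by (subst sum.inter_filter) simp_all
  also have "{p\<in>{1..m}. p \<le> m1} = {1..m1}"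
    using m1_le by auto
  finally show ?thesis
    by (simp add: Fk_def)
qed

lemma iterates_bounded: "bounded (range (xx k))"
proof -
  have "range (xx k) \<subseteq> {x. (\<Sum>p\<in>{1..m}. if p \<le> m1 then ereal (phi p (fk k p x)) else ind_nonpos (fk k p x))
                            \<le> ereal (Fk k (xx k 0))}"
    using objective_at_iterates Fk_iterates_le_start by auto
  then show ?thesis
    using objective_level_bounded[of k] bounded_subset unfolding level_bounded_def by blast
qed

lemma Fk_continuous: "continuous_on UNIV (Fk k)"
proof -
  have "continuous_on UNIV (\<lambda>x. phi p (fk k p x))" if p: "p \<in> {1..m1}" for p
  proof -
    have "continuous_on UNIV (fk k p)"
      using p m1_le convex_on_continuous[OF open_UNIV g_convex] convex_on_continuous[OF open_UNIV h_convex]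
      unfolding fk_def[abs_def] by (intro continuous_on_diff) auto
    then show ?thesis
      using continuous_on_compose2[OF convex_on_continuous[OF open_UNIV phi_convex[OF p]]] by blast
  qed
  then show ?thesis
    unfolding Fk_def[abs_def] by (intro continuous_on_sum) auto
qed

lemma Fk_iterates_bounded_below: "\<exists>L. \<forall>i. L \<le> Fk k (xx k i)"
proof -
  have "compact (Fk k ` closure (range (xx k)))"
    using iterates_bounded
    by (intro compact_continuous_image continuous_on_subset[OF Fk_continuous]) (auto simp: compact_closure)
  then have "bounded (Fk k ` closure (range (xx k)))"
    by (rule compact_imp_bounded)
  then obtain B where B: "\<forall>y\<in>Fk k ` closure (range (xx k)). norm y \<le> B"
    unfolding bounded_iff by blast
  have "- B \<le> Fk k (xx k i)" for i
  proof -
    have "xx k i \<in> closure (range (xx k))"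
      by (meson closure_subset rangeI subsetD)
    then have "norm (Fk k (xx k i)) \<le> B"
      using B by (meson imageI)
    then show ?thesis
      by (simp add: abs_le_iff)
  qed
  then show ?thesis
    by blast
qed

lemma steps_tendsto_zero: "(\<lambda>i. xx k (Suc i) - xx k i) \<longlonglongrightarrow> 0"
proof -
  obtain L where L: "\<And>i. L \<le> Fk k (xx k i)"
    using Fk_iterates_bounded_below by blast
  have "0 < lam / 2"
    using lam_pos by simp
  then show ?thesis
    using descent_steps_tendsto_zero[where F = "Fk k" and x = "xx k" and c = "lam / 2", OF Fk_descent _ L]
    by blast
qed

lemma stopping_test_eventually:
  assumes "0 < e" and "0 < r"
  shows "\<forall>\<^sub>F i in sequentially.
           (\<forall>p\<in>{1..m}. fup k i p (xx k (Suc i)) \<le> fk k p (xx k (Suc i)) + sig p k + e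
                      \<and> fk k p (xx k (Suc i)) - e \<le> flo k i p (xx k (Suc i)))
         \<and> norm (xx k (Suc i) - xx k i) \<le> r"
proof -
  have "\<forall>\<^sub>F i in sequentially. fup k i p (xx k (Suc i)) \<le> fk k p (xx k (Suc i)) + sig p k + e
                      \<and> fk k p (xx k (Suc i)) - e \<le> flo k i p (xx k (Suc i))"
    if p: "p \<in> {1..m}" for p
  proof -
    have h_error: "(\<lambda>i. h k p (xx k (Suc i)) - h k p (xx k i) - a k i p \<bullet> (xx k (Suc i) - xx k i)) \<longlonglongrightarrow> 0"
      using h_convex[OF p, of k] iterates_bounded[of k] steps_tendsto_zero[of k] subgrad_h[OF p, of k]
      by (rule linearisation_error_tendsto_zero)
    have g_error: "(\<lambda>i. g k p (xx k (Suc i)) - g k p (xx k i) - b k i p \<bullet> (xx k (Suc i) - xx k i)) \<longlonglongrightarrow> 0"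
      using g_convex[OF p, of k] iterates_bounded[of k] steps_tendsto_zero[of k] subgrad_g[OF p, of k]
      by (rule linearisation_error_tendsto_zero)
    from order_tendstoD(2)[OF h_error \<open>0 < e\<close>] order_tendstoD(2)[OF g_error \<open>0 < e\<close>]
    show ?thesis
      by eventually_elim (simp add: fup_def flo_def fk_def)
  qed
  then have errors: "\<forall>\<^sub>F i in sequentially. \<forall>p\<in>{1..m}.
      fup k i p (xx k (Suc i)) \<le> fk k p (xx k (Suc i)) + sig p k + e
      \<and> fk k p (xx k (Suc i)) - e \<le> flo k i p (xx k (Suc i))"
    by (simp add: eventually_ball_finite)
  have "(\<lambda>i. norm (xx k (Suc i) - xx k i)) \<longlonglongrightarrow> 0"
    using steps_tendsto_zero[of k] by (simp add: tendsto_norm_zero_iff)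
  from order_tendstoD(2)[OF this \<open>0 < r\<close>]
  have steps: "\<forall>\<^sub>F i in sequentially. norm (xx k (Suc i) - xx k i) \<le> r"
    by eventually_elim simp
  show ?thesis
    using errors steps by (rule eventually_conj)
qed

corollary stopping_test_passes:
  assumes "0 < e" and "0 < r"
  shows "\<exists>i. (\<forall>p\<in>{1..m}. fup k i p (xx k (Suc i)) \<le> fk k p (xx k (Suc i)) + sig p k + e
                      \<and> fk k p (xx k (Suc i)) - e \<le> flo k i p (xx k (Suc i)))
            \<and> norm (xx k (Suc i) - xx k i) \<le> r"
  using eventually_happens'[OF sequentially_bot stopping_test_eventually[OF assms]] .

end

theorem theorem4p2:
  fixes m1 m :: nat
    and phi :: "nat \<Rightarrow> real \<Rightarrow> real"
    and zs :: "nat \<Rightarrow> real"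
    and f :: "nat \<Rightarrow> 'a::euclidean_space \<Rightarrow> real"
    and g h :: "nat \<Rightarrow> nat \<Rightarrow> 'a \<Rightarrow> real"
    and ahat :: "nat \<Rightarrow> nat \<Rightarrow> real"
    and x0 :: 'a
    and ell :: "nat \<Rightarrow> real"
    and lam :: real
    and eps delta :: "nat \<Rightarrow> real"
    and a b :: "nat \<Rightarrow> nat \<Rightarrow> nat \<Rightarrow> 'a"
    and xo :: "nat \<Rightarrow> 'a"
    and xx :: "nat \<Rightarrow> nat \<Rightarrow> 'a"
  assumes fk_def: "fk = (\<lambda>k p x. g k p x - h k p x)"
    and Phi_def: "Phi = (\<lambda>p t. if p \<le> m1 then ereal (phi p t) else ind_nonpos t)"
    and I1_def: "I1 = {p\<in>{1..m}. mono (Phi p)}"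
    and I2_def: "I2 = {1..m} - I1"
    and Xk_def: "Xk = (\<lambda>k. {x. \<forall>p\<in>{m1<..m}. fk k p x \<le> 0})"
    and alph_def: "alph = (\<lambda>p k. (SUP x\<in>Xk k. ereal (max 0 (fk (Suc k) p x - fk k p x))))"
    and sig_def: "sig = (\<lambda>p k. (\<Sum>j. ahat p (k + j)))"
    and fup_def: "fup = (\<lambda>k i p x. g k p x - h k p (xx k i) - a k i p \<bullet> (x - xx k i) + sig p k)"
    and flo_def: "flo = (\<lambda>k i p x. g k p (xx k i) + b k i p \<bullet> (x - xx k i) - h k p x)"
    and obj_def: "obj = (\<lambda>k i x. (\<Sum>p\<in>{1..m1}. phi_up (phi p) (zs p) (fup k i p x)
                                    + phi_down (phi p) (zs p) (flo k i p x))
                       + lam / 2 * (norm (x - xx k i))\<^sup>2)"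
    and feas_def: "feas = (\<lambda>k i. {x. \<forall>p\<in>{m1<..m}. fup k i p x \<le> 0})"
    and stopc_def: "stopc = (\<lambda>k i.
            (\<forall>p\<in>{1..m}. fup k i p (xx k (Suc i)) \<le> fk k p (xx k (Suc i)) + sig p k + eps k)
          \<and> (\<forall>p\<in>I2. flo k i p (xx k (Suc i)) \<ge> fk k p (xx k (Suc i)) - eps k)
          \<and> norm (xx k (Suc i) - xx k i) \<le> delta k / (lam + ell k))"
    and m1_le: "m1 \<le> m"
    \<comment> \<open>problem data\<close>
    and phi_convex: "\<forall>p\<in>{1..m1}. convex_on UNIV (phi p)"
    and zs_min: "\<forall>p\<in>{1..m1}. \<not> mono (phi p) \<and> \<not> antimono (phi p)
                   \<longrightarrow> (\<forall>t. phi p (zs p) \<le> phi p t)"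
    \<comment> \<open>Assumption 1\<close>
    and A1_convex: "\<forall>k. \<forall>p\<in>{1..m}. convex_on UNIV (g k p) \<and> convex_on UNIV (h k p)"
    and A1_epi: "\<forall>p\<in>{1..m}. epi_converges (\<lambda>k x. ereal (fk k p x)) (\<lambda>x. ereal (f p x))"
    and A1_bdd: "\<forall>p\<in>{1..m}. \<forall>x.
          - \<infinity> < Liminf (sequentially \<times>\<^sub>F nhds x) (\<lambda>(k, x'). ereal (fk k p x'))
        \<and> Limsup (sequentially \<times>\<^sub>F nhds x) (\<lambda>(k, x'). ereal (fk k p x')) < \<infinity>"
    and A1_epi_comp: "\<forall>p\<in>{1..m}. epi_converges (\<lambda>k x. Phi p (fk k p x)) (\<lambda>x. Phi p (f p x))"
    \<comment> \<open>Assumption 2\<close>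
    and A2_zero: "\<forall>p k. p \<le> m1 \<longrightarrow> ahat p k = 0"
    and A2_nonneg: "\<forall>p\<in>{m1<..m}. \<forall>k. 0 \<le> ahat p k"
    and A2_le: "\<forall>p\<in>{m1<..m}. \<forall>k. alph p k \<le> ereal (ahat p k)"
    and A2_summable: "\<forall>p\<in>{m1<..m}. summable (ahat p)"
    and A2_x0: "\<forall>p\<in>{m1<..m}. fk 0 p x0 \<le> - (\<Sum>k. ahat p k)"
    \<comment> \<open>Assumption 3\<close>
    and A3: "\<forall>k. 0 < ell k \<and> (\<forall>p\<in>{1..m}. \<forall>x x'.
          min (hausdorff_dist (subdiff (g k p) x) (subdiff (g k p) x'))
              (hausdorff_dist (subdiff (h k p) x) (subdiff (h k p) x'))
            \<le> ereal (ell k * norm (x - x')))"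
    \<comment> \<open>Assumption 4\<close>
    and A4: "\<forall>k. level_bounded (\<lambda>x. \<Sum>p\<in>{1..m}. Phi p (fk k p x))"
    \<comment> \<open>parameters of the method\<close>
    and lam_pos: "0 < lam"
    and eps_pos: "\<forall>k. 0 < eps k" and eps_dec: "decseq eps" and eps_lim: "eps \<longlonglongrightarrow> 0"
    and delta_pos: "\<forall>k. 0 < delta k" and delta_dec: "decseq delta" and delta_lim: "delta \<longlonglongrightarrow> 0"
    and ratio_dec: "decseq (\<lambda>k. delta k / (lam + ell k))"
    and ratio_lim: "(\<lambda>k. delta k / (lam + ell k)) \<longlonglongrightarrow> 0"
    \<comment> \<open>the iterates of the method\<close>
    and subgrad: "\<forall>k i. \<forall>p\<in>{1..m}.
          a k i p \<in> subdiff (h k p) (xx k i) \<and> b k i p \<in> subdiff (g k p) (xx k i)"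
    and start: "xo 0 = x0"
    and inner_start: "\<forall>k. xx k 0 = xo k"
    and inner_step: "\<forall>k i. feas k i \<noteq> {} \<longrightarrow>
          xx k (Suc i) \<in> feas k i \<and> (\<forall>x\<in>feas k i. obj k i (xx k (Suc i)) \<le> obj k i x)"
    and outer_step: "\<forall>k. xo (Suc k) = xx k (LEAST i. stopc k i)"
  shows "(\<forall>k i. feas k i \<noteq> {}) \<and> (\<forall>k. \<exists>i. stopc k i)"
proof -
  interpret D: prox_adc_data m1 m phi zs g h ahat lam a b xx .
  have eqs: "fk = D.fk" "sig = D.sig" "fup = D.fup" "flo = D.flo" "obj = D.obj" "feas = D.feas"
    by (simp_all add: fun_eq_iff fk_def sig_def fup_def flo_def obj_def feas_def
        D.fk_def D.sig_def D.fup_def D.flo_def D.obj_def D.feas_def)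
  interpret P: prox_adc m1 m phi zs g h ahat lam a b xx
  proof (unfold_locales, unfold eqs[symmetric])
    fix p k x
    assume "p \<in> {m1<..m}" and "\<forall>q\<in>{m1<..m}. fk k q x \<le> 0"
    then show "fk (Suc k) p x - fk k p x \<le> ahat p k"
      using A2_le by (fastforce simp: alph_def Xk_def SUP_le_iff)
  next
    show "p \<in> {m1<..m} \<Longrightarrow> fk 0 p (xx 0 0) \<le> - (\<Sum>k. ahat p k)" for p
      using A2_x0 start inner_start by simp
    show "level_bounded (\<lambda>x. \<Sum>p\<in>{1..m}.
            if p \<le> m1 then ereal (phi p (fk k p x)) else ind_nonpos (fk k p x))" for k
      using A4 by (simp add: Phi_def)
    show "\<exists>j. xx (Suc k) 0 = xx k j" for k
      using inner_start outer_step by metis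
  qed (use m1_le phi_convex zs_min A1_convex A2_zero A2_nonneg A2_summable lam_pos subgrad inner_step in auto)
  have "\<exists>i. stopc k i" for k
  proof -
    have "0 < delta k / (lam + ell k)"
      using delta_pos lam_pos A3 by (simp add: add_pos_pos)
    with P.stopping_test_passes[OF eps_pos[rule_format]] show ?thesis
      unfolding stopc_def I2_def eqs by fastforce
  qed
  then show ?thesis
    using P.feas_nonempty unfolding eqs by blast
qed

end
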